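(* Let $\rho_{ABC}=\sum_bp_B(b)|b\rangle\langle b|_B\otimes\rho^{|b}_{AC}$ be a state classical on $B$, and $\alpha\in(1,\infty)$. Then $$H_\alpha(A|B^{\uparrow}C^{\downarrow})_\rho=\sup_{q_B\in\Delta(B)}-D_\alpha(\rho_{ABC}\|I_A\otimes\sigma_{BC}),$$ where $\sigma_{BC}=\sum_bq_B(b)|b\rangle\langle b|\otimes\rho^{|b}_C$ and $\rho^{|b}_C=\mathrm{tr}_A[\rho^{|b}_{AC}]$.
   Context: Finite-dimensional spaces, $\log$ base 2. For $\alpha>1$, $D_\alpha(\rho\|\sigma)=\frac{1}{\alpha-1}\log\big(\mathrm{tr}[(\sigma^{\frac{1-\alpha}{2\alpha}}\rho\sigma^{\frac{1-\alpha}{2\alpha}})^\alpha]/\mathrm{tr}\rho\big)$ if $\mathrm{supp}\rho\subseteq\mathrm{supp}\sigma$, else $+\infty$. $H^{\downarrow}_\alpha(A|C)_\rho=-D_\alpha(\rho_{AC}\|I_A\otimes\rho_C)$. Partially optimized conditional Rényi entropy: $H_\alpha(A|B^{\uparrow}C^{\downarrow})_\rho:=\frac{\alpha}{1-\alpha}\log\big(\sum_bp_B(b)2^{\frac{1-\alpha}{\alpha}H^{\downarrow}_\alpha(A|C)_{\rho^{|b}}}\big)$. $\Delta(B)$ is the set of probability distributions on the alphabet of $B$. *)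

theory Defs
  imports "HOL-Analysis.Analysis"
begin

text \<open>Complex square matrices indexed by a finite type 'n: type complex^'n^'n.
  Composite systems use product index types, e.g. A B C has index type 'a \<times> 'b \<times> 'c.\<close>

type_synonym 'n cmat = "complex^'n^'n"

definition adj :: "('n::finite) cmat \<Rightarrow> 'n cmat" where
  "adj M = (\<chi> i j. cnj (M $ j $ i))"

definition hermitian :: "('n::finite) cmat \<Rightarrow> bool" where
  "hermitian M \<longleftrightarrow> adj M = M"

definition unitary :: "('n::finite) cmat \<Rightarrow> bool" where
  "unitary U \<longleftrightarrow> adj U ** U = mat 1 \<and> U ** adj U = mat 1"

definition diagm :: "(('n::finite) \<Rightarrow> real) \<Rightarrow> 'n cmat" where
  "diagm l = (\<chi> i j. if i = j then complex_of_real (l i) else 0)"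

definition mtrace :: "('n::finite) cmat \<Rightarrow> complex" where
  "mtrace M = (\<Sum>i\<in>UNIV. M $ i $ i)"

definition psd :: "('n::finite) cmat \<Rightarrow> bool" where
  "psd M \<longleftrightarrow> hermitian M \<and>
     (\<forall>v::complex^'n. 0 \<le> Re (\<Sum>i\<in>UNIV. \<Sum>j\<in>UNIV. cnj (v $ i) * M $ i $ j * v $ j))"

definition density_op :: "('n::finite) cmat \<Rightarrow> bool" where
  "density_op M \<longleftrightarrow> psd M \<and> mtrace M = 1"

text \<open>Functional calculus for Hermitian matrices via a spectral decomposition
  (well defined, i.e. independent of the chosen decomposition).\<close>
definition mat_fun :: "(real \<Rightarrow> real) \<Rightarrow> ('n::finite) cmat \<Rightarrow> 'n cmat" where
  "mat_fun f M = (SOME N. \<exists>U l. unitary U \<and> M = U ** diagm l ** adj U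
                               \<and> N = U ** diagm (f \<circ> l) ** adj U)"

text \<open>Matrix power of a PSD matrix; powers are taken on the support
  (0 powr x = 0, i.e. generalized inverse convention for negative exponents).\<close>
definition mpow :: "('n::finite) cmat \<Rightarrow> real \<Rightarrow> 'n cmat" where
  "mpow M x = mat_fun (\<lambda>t. t powr x) M"

definition supp :: "('n::finite) cmat \<Rightarrow> (complex^'n) set" where
  "supp M = range (\<lambda>v. M *v v)"

definition renyi_D :: "real \<Rightarrow> ('n::finite) cmat \<Rightarrow> 'n cmat \<Rightarrow> ereal" where
  "renyi_D \<alpha> \<rho> \<sigma> =
    (if supp \<rho> \<subseteq> supp \<sigma> then
       ereal (1 / (\<alpha> - 1) * log 2
         (Re (mtrace (mpow (mpow \<sigma> ((1 - \<alpha>) / (2 * \<alpha>)) ** \<rho> ** mpow \<sigma> ((1 - \<alpha>) / (2 * \<alpha>))) \<alpha>))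
          / Re (mtrace \<rho>)))
     else \<infinity>)"

definition kron :: "('m::finite) cmat \<Rightarrow> ('n::finite) cmat \<Rightarrow> ('m \<times> 'n) cmat" where
  "kron X Y = (\<chi> x y. X $ fst x $ fst y * Y $ snd x $ snd y)"

definition ptrace1 :: "('a::finite \<times> 'c::finite) cmat \<Rightarrow> 'c cmat" where
  "ptrace1 M = (\<chi> c c'. \<Sum>a\<in>UNIV. M $ (a, c) $ (a, c'))"

definition cond_H_down :: "real \<Rightarrow> ('a::finite \<times> 'c::finite) cmat \<Rightarrow> ereal" where
  "cond_H_down \<alpha> \<rho> = - renyi_D \<alpha> \<rho> (kron (mat 1 :: 'a cmat) (ptrace1 \<rho>))"

text \<open>Partially optimized conditional entropy H_alpha(A|B^up C^down) of the cq state
  given by distribution p on B and conditional states rhoc b on AC.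
  (The entropies H_down of states are always finite.)\<close>
definition H_partial :: "real \<Rightarrow> ('b::finite \<Rightarrow> real) \<Rightarrow> ('b \<Rightarrow> ('a::finite \<times> 'c::finite) cmat) \<Rightarrow> real" where
  "H_partial \<alpha> p rhoc = \<alpha> / (1 - \<alpha>) * log 2
     (\<Sum>b\<in>UNIV. p b * 2 powr ((1 - \<alpha>) / \<alpha> * real_of_ereal (cond_H_down \<alpha> (rhoc b))))"

definition prob_dists :: "('b::finite \<Rightarrow> real) set" where
  "prob_dists = {q. (\<forall>b. 0 \<le> q b) \<and> (\<Sum>b\<in>UNIV. q b) = 1}"

text \<open>rho_ABC = sum_b p(b) |b><b|_B \<otimes> rho^{|b}_AC, written on index type 'a \<times> 'b \<times> 'c.\<close>
definition cq_state :: "('b::finite \<Rightarrow> real) \<Rightarrow> ('b \<Rightarrow> ('a::finite \<times> 'c::finite) cmat) \<Rightarrow> ('a \<times> 'b \<times> 'c) cmat" where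
  "cq_state p rhoc = (\<chi> x y. case x of (a, b, c) \<Rightarrow> case y of (a', b', c') \<Rightarrow>
      if b = b' then complex_of_real (p b) * rhoc b $ (a, c) $ (a', c') else 0)"

definition sigma_BC :: "('b::finite \<Rightarrow> real) \<Rightarrow> ('b \<Rightarrow> ('a::finite \<times> 'c::finite) cmat) \<Rightarrow> ('b \<times> 'c) cmat" where
  "sigma_BC q rhoc = (\<chi> x y. case x of (b, c) \<Rightarrow> case y of (b', c') \<Rightarrow>
      if b = b' then complex_of_real (q b) * ptrace1 (rhoc b) $ c $ c' else 0)"

end

theory Submission
  imports Defs
begin

text \<open>Everything is block diagonal in the classical register \<open>B\<close>. For
  \<open>\<sigma>\<^sub>q = I\<^sub>A \<otimes> \<sigma>\<^sub>B\<^sub>C\<close> the \<open>b\<close>-block of \<open>\<sigma>\<^sub>q\<^bsup>(1-\<alpha>)/2\<alpha>\<^esup> \<rho>\<^sub>A\<^sub>B\<^sub>C \<sigma>\<^sub>q\<^bsup>(1-\<alpha>)/2\<alpha>\<^esup>\<close>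
  is \<open>q\<^sub>b\<^bsup>(1-\<alpha>)/\<alpha>\<^esup> p\<^sub>b\<close> times the corresponding sandwich of \<open>\<rho>\<^sup>|\<^sup>b\<close> by
  \<open>I\<^sub>A \<otimes> \<rho>\<^sub>C\<^sup>|\<^sup>b\<close>, so the trace of its \<open>\<alpha>\<close>-th power is \<open>\<Sum>\<^sub>b q\<^sub>b\<^bsup>1-\<alpha>\<^esup> a\<^sub>b\<^sup>\<alpha>\<close> with
  \<open>a\<^sub>b = p\<^sub>b 2\<^bsup>(1-\<alpha>)/\<alpha> H\<^sup>\<down>\<^sub>\<alpha>(A|C)\<^esup>\<close>, and the support condition holds iff \<open>q\<^sub>b > 0\<close>
  whenever \<open>p\<^sub>b > 0\<close>. Jensen's inequality for \<open>t\<^sup>\<alpha>\<close> bounds this sum below by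
  \<open>(\<Sum>\<^sub>b a\<^sub>b)\<^sup>\<alpha>\<close>, with equality at \<open>q = a / \<Sum>\<^sub>b a\<^sub>b\<close>. The matrix powers are handled
  through a spectral theorem for Hermitian matrices, proved with Householder reflections.\<close>

section \<open>Adjoints, unitaries and the functional calculus\<close>

lemma adj_adj [simp]: "adj (adj A) = A"
  by (simp add: adj_def vec_eq_iff)

lemma adj_mult: "adj (A ** B) = adj B ** adj A"
  by (simp add: adj_def matrix_matrix_mult_def vec_eq_iff mult.commute)

lemma adj_mat1 [simp]: "adj (mat 1) = mat 1"
  by (simp add: adj_def mat_def vec_eq_iff)

lemma adj_diagm [simp]: "adj (diagm l) = diagm l"
  by (simp add: adj_def diagm_def vec_eq_iff)

lemma mult_diagm_entry [simp]: "(A ** diagm l) $ i $ j = A $ i $ j * of_real (l j)"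
  by (simp add: matrix_matrix_mult_def diagm_def if_distrib if_distribR cong: if_cong)

lemma diagm_mult_entry [simp]: "(diagm l ** A) $ i $ j = of_real (l i) * A $ i $ j"
  by (simp add: matrix_matrix_mult_def diagm_def if_distrib if_distribR cong: if_cong)

lemma diagm_mult_vec_entry: "(diagm l *v v) $ i = of_real (l i) * v $ i"
  by (simp add: matrix_vector_mult_def diagm_def if_distrib if_distribR cong: if_cong)

lemma unitary_mat1 [simp]: "unitary (mat 1)"
  by (simp add: unitary_def)

lemma unitary_mult: "unitary U \<Longrightarrow> unitary V \<Longrightarrow> unitary (U ** V)"
  unfolding unitary_def adj_mult
  by (metis matrix_mul_assoc matrix_mul_lid)

lemma unitary_simps:
  assumes "unitary U"
  shows "adj U ** U = mat 1" "U ** adj U = mat 1" "X ** adj U ** U = X" "X ** U ** adj U = X"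
  using assms unfolding unitary_def by (simp_all flip: matrix_mul_assoc)

lemma hermitian_entry:
  assumes "hermitian N"
  shows "N $ i $ j = cnj (N $ j $ i)"
proof -
  have "N $ i $ j = adj N $ i $ j" using assms by (simp add: hermitian_def)
  thus ?thesis by (simp add: adj_def)
qed

lemma hermitian_diag_real:
  assumes "hermitian N"
  shows "of_real (Re (N $ i $ i)) = N $ i $ i"
proof -
  have "Im (N $ i $ i) = 0" using arg_cong[OF hermitian_entry[OF assms, of i i], of Im] by simp
  thus ?thesis by (simp add: complex_eq_iff)
qed

lemma hermitian_spectral_form: "hermitian (U ** diagm l ** adj U)"
  by (simp add: hermitian_def adj_mult matrix_mul_assoc)

text \<open>A unitary intertwining two diagonal matrices only connects equal eigenvalues, hence it
  also intertwines their images under any function.\<close>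
lemma unitary_diag_fun_unique:
  assumes U: "unitary U" and V: "unitary V"
    and eq: "U ** diagm l ** adj U = V ** diagm m ** adj V"
  shows "U ** diagm (f \<circ> l) ** adj U = V ** diagm (f \<circ> m) ** adj V"
proof -
  define W where "W = adj V ** U"
  have "adj V ** (U ** diagm l ** adj U) ** U = adj V ** (V ** diagm m ** adj V) ** U"
    using eq by simp
  hence WL: "W ** diagm l = diagm m ** W"
    using U V unfolding W_def unitary_def
    by (metis matrix_mul_assoc matrix_mul_lid matrix_mul_rid)
  have WF: "W ** diagm (f \<circ> l) = diagm (f \<circ> m) ** W"
  proof -
    have "W $ i $ j * of_real (f (l j)) = of_real (f (m i)) * W $ i $ j" for i j
    proof (cases "W $ i $ j = 0")
      case False
      have "W $ i $ j * of_real (l j) = of_real (m i) * W $ i $ j"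
        using arg_cong[OF WL, of "\<lambda>X. X $ i $ j"] by simp
      with False have "l j = m i" by (simp add: mult.commute)
      thus ?thesis by (simp add: mult.commute)
    qed simp
    thus ?thesis by (simp add: vec_eq_iff)
  qed
  have UVW: "U = V ** W" using V unfolding W_def unitary_def
    by (metis matrix_mul_assoc matrix_mul_lid)
  have WW: "W ** adj W = mat 1"
    using U V unfolding W_def unitary_def adj_mult adj_adj
    by (metis matrix_mul_assoc matrix_mul_rid)
  have "U ** diagm (f \<circ> l) ** adj U = V ** (W ** diagm (f \<circ> l)) ** adj W ** adj V"
    unfolding UVW adj_mult by (simp add: matrix_mul_assoc)
  also have "\<dots> = V ** diagm (f \<circ> m) ** (W ** adj W) ** adj V"
    unfolding WF by (simp add: matrix_mul_assoc)
  finally show ?thesis using WW by simp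
qed

lemma mat_fun_spectral:
  assumes U: "unitary U" and M: "M = U ** diagm l ** adj U"
  shows "mat_fun f M = U ** diagm (f \<circ> l) ** adj U"
proof -
  have "\<exists>N U l. unitary U \<and> M = U ** diagm l ** adj U \<and> N = U ** diagm (f \<circ> l) ** adj U"
    using U M by blast
  from someI_ex[OF this] obtain U' l' where
    "unitary U'" "M = U' ** diagm l' ** adj U'" "mat_fun f M = U' ** diagm (f \<circ> l') ** adj U'"
    unfolding mat_fun_def by blast
  thus ?thesis using unitary_diag_fun_unique[OF _ U, of U' l' l f] M by simp
qed

lemma mpow_spectral:
  assumes "unitary U" "M = U ** diagm l ** adj U"
  shows "mpow M x = U ** diagm (\<lambda>i. l i powr x) ** adj U"
  unfolding mpow_def using mat_fun_spectral[OF assms] by (simp add: comp_def)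

section \<open>The spectral theorem\<close>

definition cinner :: "complex^'n::finite \<Rightarrow> complex^'n \<Rightarrow> complex" where
  "cinner v w = (\<Sum>i\<in>UNIV. cnj (v $ i) * w $ i)"

lemma cinner_add_left: "cinner (u + v) w = cinner u w + cinner v w"
  by (simp add: cinner_def sum.distrib algebra_simps)

lemma cinner_add_right: "cinner w (u + v) = cinner w u + cinner w v"
  by (simp add: cinner_def sum.distrib algebra_simps)

lemma cinner_diff_left: "cinner (u - v) w = cinner u w - cinner v w"
  by (simp add: cinner_def sum_subtractf algebra_simps)

lemma cinner_diff_right: "cinner w (u - v) = cinner w u - cinner w v"
  by (simp add: cinner_def sum_subtractf algebra_simps)

lemma cinner_scale_left: "cinner (c *s u) w = cnj c * cinner u w"
  by (simp add: cinner_def sum_distrib_left algebra_simps)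

lemma cinner_scale_right: "cinner w (c *s u) = c * cinner w u"
  by (simp add: cinner_def sum_distrib_left algebra_simps)

lemmas cinner_simps = cinner_add_left cinner_add_right cinner_diff_left cinner_diff_right
  cinner_scale_left cinner_scale_right

lemma cinner_cnj: "cnj (cinner v w) = cinner w v"
  by (simp add: cinner_def mult.commute)

lemma cinner_self: "cinner v v = of_real ((norm v)\<^sup>2)"
proof -
  have "(norm v)\<^sup>2 = (\<Sum>i\<in>UNIV. (cmod (v $ i))\<^sup>2)"
    by (simp add: norm_vec_def L2_set_def sum_nonneg)
  moreover have "cnj (v $ i) * v $ i = of_real ((cmod (v $ i))\<^sup>2)" for i
    by (metis complex_norm_square mult.commute)
  ultimately show ?thesis by (simp add: cinner_def)
qed

lemma cinner_self_eq_0_iff: "cinner v v = 0 \<longleftrightarrow> v = 0"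
  by (simp add: cinner_self)

lemma cinner_adj: "cinner x (adj A *v y) = cinner (A *v x) y"
proof -
  have "cinner x (adj A *v y) = (\<Sum>i\<in>UNIV. \<Sum>j\<in>UNIV. cnj (x $ i) * cnj (A $ j $ i) * y $ j)"
    by (simp add: cinner_def adj_def matrix_vector_mult_def sum_distrib_left algebra_simps)
  also have "\<dots> = (\<Sum>j\<in>UNIV. \<Sum>i\<in>UNIV. cnj (x $ i) * cnj (A $ j $ i) * y $ j)"
    by (rule sum.swap)
  also have "\<dots> = cinner (A *v x) y"
    by (simp add: cinner_def matrix_vector_mult_def sum_distrib_right sum_distrib_left algebra_simps)
  finally show ?thesis .
qed

lemma hermitian_cinner: "hermitian A \<Longrightarrow> cinner x (A *v y) = cinner (A *v x) y"
  by (metis cinner_adj hermitian_def)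

lemma cinner_matrix_vector: "cinner v (M *v v) = (\<Sum>i\<in>UNIV. \<Sum>j\<in>UNIV. cnj (v $ i) * M $ i $ j * v $ j)"
  by (simp add: cinner_def matrix_vector_mult_def sum_distrib_left algebra_simps)

lemma psd_iff: "psd M \<longleftrightarrow> hermitian M \<and> (\<forall>v. 0 \<le> Re (cinner v (M *v v)))"
  by (simp add: psd_def cinner_matrix_vector)

lemma matrix_vector_axis: "(A *v axis j 1) $ i = A $ i $ j"
  by (simp add: matrix_vector_mult_def axis_def if_distrib if_distribR cong: if_cong)

lemma cinner_axis_left: "cinner (axis j 1) v = v $ j"
  by (simp add: cinner_def axis_def if_distrib if_distribR cong: if_cong)

lemma cinner_axis_right: "cinner v (axis j 1) = cnj (v $ j)"
  by (simp add: cinner_def axis_def if_distrib if_distribR cong: if_cong)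

lemma norm_axis_complex [simp]: "norm (axis j (1::complex) :: complex^'n::finite) = 1"
  by (rule norm_Basis) (auto simp: Basis_vec_def)

lemma mat_matrix_vector: "mat c *v u = c *s (u::complex^'n::finite)"
  by (simp add: mat_def matrix_vector_mult_def vec_eq_iff if_distrib if_distribR cong: if_cong)

lemma norm_scale_vec: "norm (c *s u) = cmod c * norm (u::complex^'n::finite)"
proof -
  have cc: "cnj c * c = of_real ((cmod c)\<^sup>2)" by (metis complex_norm_square mult.commute)
  have "cinner (c *s u) (c *s u) = cnj c * c * cinner u u"
    unfolding cinner_simps by simp
  hence "of_real ((norm (c *s u))\<^sup>2) = (of_real ((cmod c * norm u)\<^sup>2) :: complex)"
    unfolding cc cinner_self by (simp add: power_mult_distrib)
  hence "(norm (c *s u))\<^sup>2 = (cmod c * norm u)\<^sup>2" using of_real_eq_iff by blast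
  thus ?thesis by (simp add: power2_eq_iff_nonneg)
qed

text \<open>Perturbing \<open>v\<close> to \<open>v - s z w\<close> with \<open>z = \<langle>w, B v\<rangle>\<close> and small \<open>s > 0\<close> would make
  the form negative.\<close>
lemma nonneg_form_null_orth:
  fixes B :: "complex^'n::finite^'n"
  assumes herm: "hermitian B"
    and Wadd: "\<And>x y. x \<in> W \<Longrightarrow> y \<in> W \<Longrightarrow> x + y \<in> W"
    and Wscale: "\<And>c x. x \<in> W \<Longrightarrow> c *s x \<in> W"
    and pos: "\<And>u. u \<in> W \<Longrightarrow> 0 \<le> Re (cinner u (B *v u))"
    and v: "v \<in> W" and zero: "Re (cinner v (B *v v)) = 0"
    and w: "w \<in> W"
  shows "cinner w (B *v v) = 0"
proof (rule ccontr)
  define z where "z = cinner w (B *v v)"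
  assume "cinner w (B *v v) \<noteq> 0"
  hence z0: "z \<noteq> 0" by (simp add: z_def)
  define c where "c = Re (cinner w (B *v w))"
  have c0: "0 \<le> c" using pos[OF w] by (simp add: c_def)
  define s where "s = 1 / (c + 1)"
  have s0: "0 < s" using c0 by (simp add: s_def)
  have sc: "s * c < 1" using c0 by (simp add: s_def field_simps)
  define t where "t = - complex_of_real s * z"
  have "v + t *s w \<in> W" using v w Wadd Wscale by blast
  hence ge: "0 \<le> Re (cinner (v + t *s w) (B *v (v + t *s w)))" by (rule pos)
  have vw: "cinner v (B *v w) = cnj z"
    unfolding z_def by (metis hermitian_cinner[OF herm] cinner_cnj)
  have "cinner (v + t *s w) (B *v (v + t *s w)) =
      cinner v (B *v v) + t * cnj z + cnj t * z + cnj t * t * cinner w (B *v w)"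
    by (simp add: cinner_simps matrix_vector_right_distrib vector_scalar_commute vw z_def
        algebra_simps)
  also have "Re \<dots> = - 2 * s * (cmod z)\<^sup>2 + s\<^sup>2 * (cmod z)\<^sup>2 * c"
    using zero cmod_power2[of z] unfolding power2_eq_square
    by (simp add: t_def c_def algebra_simps power2_eq_square complex_mult_cnj[symmetric]
        cmod_power2)
  finally have "0 \<le> s * (cmod z)\<^sup>2 * (s * c - 2)"
    using ge by (simp add: algebra_simps power2_eq_square)
  moreover have "s * (cmod z)\<^sup>2 * (s * c - 2) < 0"
    using s0 z0 sc by (intro mult_pos_neg) auto
  ultimately show False by simp
qed

lemma max_qform_eigenvector:
  fixes N :: "complex^'n::finite^'n"
  assumes herm: "hermitian N"
    and Wadd: "\<And>x y. x \<in> W \<Longrightarrow> y \<in> W \<Longrightarrow> x + y \<in> W"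
    and Wscale: "\<And>c x. x \<in> W \<Longrightarrow> c *s x \<in> W"
    and inv: "\<And>v. v \<in> W \<Longrightarrow> N *v v \<in> W"
    and v0: "v0 \<in> W" "norm v0 = 1"
    and max: "\<And>u. u \<in> W \<Longrightarrow> norm u = 1 \<Longrightarrow> Re (cinner u (N *v u)) \<le> Re (cinner v0 (N *v v0))"
  shows "N *v v0 = of_real (Re (cinner v0 (N *v v0))) *s v0"
proof -
  define f where "f = (\<lambda>v::complex^'n. Re (cinner v (N *v v)))"
  define lam where "lam = f v0"
  define B where "B = mat (of_real lam) - N"
  have hB: "hermitian B" using herm
    unfolding B_def hermitian_def by (simp add: adj_def mat_def vec_eq_iff)
  have ReBq: "Re (cinner u (B *v u)) = lam * (norm u)\<^sup>2 - f u" for u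
    unfolding B_def f_def
    by (simp add: matrix_vector_mult_diff_rdistrib mat_matrix_vector cinner_simps cinner_self)
  have pos: "0 \<le> Re (cinner u (B *v u))" if u: "u \<in> W" for u
  proof (cases "u = 0")
    case False
    define c where "c = (of_real (1 / norm u) :: complex)"
    have nu: "norm u > 0" using False by simp
    have "norm (c *s u) = 1" using nu by (simp add: c_def norm_scale_vec norm_divide)
    hence "f (c *s u) \<le> lam" using max[OF Wscale[OF u]] by (simp add: f_def lam_def)
    moreover have "f (c *s u) = f u / (norm u)\<^sup>2"
      unfolding f_def by (simp add: cinner_simps vector_scalar_commute c_def power2_eq_square)
    ultimately have "f u \<le> lam * (norm u)\<^sup>2" using nu by (simp add: field_simps)
    thus ?thesis unfolding ReBq by simp
  qed (simp add: cinner_def)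
  have zero: "Re (cinner v0 (B *v v0)) = 0" unfolding ReBq v0(2) lam_def by simp
  have "B *v v0 = of_real lam *s v0 + (-1) *s (N *v v0)"
    unfolding B_def by (simp add: matrix_vector_mult_diff_rdistrib mat_matrix_vector vec_eq_iff)
  hence "B *v v0 \<in> W" unfolding \<open>B *v v0 = _\<close> by (intro Wadd Wscale inv v0(1))
  with hB Wadd Wscale pos v0(1) zero have "cinner (B *v v0) (B *v v0) = 0"
    by (rule nonneg_form_null_orth)
  thus ?thesis
    unfolding B_def cinner_self_eq_0_iff lam_def f_def
    by (simp add: matrix_vector_mult_diff_rdistrib mat_matrix_vector)
qed

lemma hermitian_eigenvector_in_coordinate_subspace:
  fixes N :: "complex^'n::finite^'n"
  assumes herm: "hermitian N" and j: "j \<notin> K"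
    and inv: "\<And>v. \<forall>i\<in>K. v $ i = 0 \<Longrightarrow> \<forall>i\<in>K. (N *v v) $ i = 0"
  shows "\<exists>w lam. (\<forall>i\<in>K. w $ i = 0) \<and> norm w = 1 \<and> N *v w = lam *s w"
proof -
  define W where "W = {v::complex^'n. \<forall>i\<in>K. v $ i = 0}"
  have "W = (\<Inter>i\<in>K. {v. v $ i = 0})" unfolding W_def by auto
  moreover have "closed {v::complex^'n. v $ i = 0}" for i
    by (intro closed_Collect_eq continuous_intros)
  ultimately have "closed W" by auto
  hence "compact (sphere 0 1 \<inter> W)" by auto
  moreover have "axis j 1 \<in> sphere 0 1 \<inter> W"
    using j norm_axis_complex[of j] unfolding W_def by (auto simp: axis_def)
  moreover have "continuous_on (sphere 0 1 \<inter> W) (\<lambda>v. Re (cinner v (N *v v)))"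
    unfolding cinner_matrix_vector by (intro continuous_intros)
  ultimately obtain v0 where v0: "v0 \<in> sphere 0 1 \<inter> W"
    and "\<And>u. u \<in> sphere 0 1 \<inter> W \<Longrightarrow> Re (cinner u (N *v u)) \<le> Re (cinner v0 (N *v v0))"
    using continuous_attains_sup[of "sphere 0 1 \<inter> W" "\<lambda>v. Re (cinner v (N *v v))"] by blast
  hence "N *v v0 = of_real (Re (cinner v0 (N *v v0))) *s v0"
    using inv by (intro max_qform_eigenvector[OF herm, of W]) (auto simp: W_def)
  thus ?thesis using v0 unfolding W_def by auto
qed

definition house_coeff :: "complex^'n::finite \<Rightarrow> real" where
  "house_coeff v = (if v = 0 then 0 else 2 / (norm v)\<^sup>2)"

definition house :: "complex^'n::finite \<Rightarrow> complex^'n^'n" where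
  "house v = (\<chi> i k. (if i = k then 1 else 0) - of_real (house_coeff v) * v $ i * cnj (v $ k))"

lemma house_apply: "house v *v x = x - (of_real (house_coeff v) * cinner v x) *s v"
proof -
  define c where "c = complex_of_real (house_coeff v)"
  have m: "(if P then 1 else 0) * a = (if P then a else (0::complex))" for P a by simp
  have "(house v *v x) $ i = (\<Sum>k\<in>UNIV. (if i = k then x $ k else 0) - c * v $ i * (cnj (v $ k) * x $ k))"
    for i unfolding house_def matrix_vector_mult_def c_def by (simp add: left_diff_distrib mult.assoc m)
  thus ?thesis by (simp add: vec_eq_iff sum_subtractf cinner_def sum_distrib_left c_def mult_ac)
qed

lemma adj_house: "adj (house v) = house v"
  by (simp add: house_def adj_def vec_eq_iff)

lemma house_involution: "house v *v (house v *v x) = x"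
proof (cases "v = 0")
  case True thus ?thesis by (simp add: house_apply house_coeff_def)
next
  case False
  have cv: "of_real (house_coeff v) * cinner v v = 2"
    using False by (simp add: house_coeff_def cinner_self del: of_real_power)
  have "cinner v (house v *v x) = cinner v x - cinner v x * (of_real (house_coeff v) * cinner v v)"
    unfolding house_apply cinner_simps by (simp only: mult_ac)
  hence "cinner v (house v *v x) = - cinner v x" unfolding cv by simp
  thus ?thesis unfolding house_apply[of v "house v *v x"]
    by (simp add: house_apply algebra_simps)
qed

lemma unitary_house: "unitary (house v)"
proof -
  have "house v ** house v = mat 1"
    unfolding matrix_eq by (simp add: matrix_vector_mul_assoc[symmetric] house_involution)
  thus ?thesis by (simp add: unitary_def adj_house)
qed

lemma house_fix: "cinner v x = 0 \<Longrightarrow> house v *v x = x"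
  by (simp add: house_apply)

text \<open>The condition \<open>y $ j \<in> \<real>\<close> makes \<open>\<langle>e\<^sub>j - y, e\<^sub>j\<rangle>\<close> real; without it no reflection maps
  \<open>e\<^sub>j\<close> to \<open>y\<close>.\<close>
lemma house_axis:
  assumes ny: "norm y = 1" and yj: "y $ j = of_real r"
  shows "house (axis j 1 - y) *v axis j 1 = y"
proof (cases "axis j 1 - y = 0")
  case True thus ?thesis by (simp add: house_apply house_coeff_def)
next
  case False
  define v where "v = axis j 1 - y"
  have ajj: "axis j 1 $ j = (1::complex)" by (simp add: axis_def)
  have c1: "cinner v (axis j 1) = 1 - of_real r"
    unfolding v_def cinner_axis_right by (simp add: ajj yj)
  have yy: "cinner y y = 1" using ny by (simp add: cinner_self)
  have "cinner v v = 2 - 2 * of_real r"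
    unfolding v_def cinner_simps cinner_axis_right cinner_axis_left yy
    by (simp add: ajj yj)
  hence "of_real ((norm v)\<^sup>2) = (of_real (2 - 2 * r) :: complex)"
    unfolding cinner_self by simp
  hence nr: "(norm v)\<^sup>2 = 2 - 2 * r" using of_real_eq_iff by blast
  have v0: "v \<noteq> 0" using False by (simp add: v_def)
  hence r1: "1 - r \<noteq> 0" using nr by auto
  have "house_coeff v = 1 / (1 - r)"
    using v0 r1 unfolding house_coeff_def nr by (simp add: divide_simps)
  hence "of_real (house_coeff v) * cinner v (axis j 1) = of_real (1 / (1 - r) * (1 - r))"
    unfolding c1 by simp
  also have "\<dots> = 1" using r1 by simp
  finally have "house v *v axis j 1 = axis j 1 - v" by (simp add: house_apply)
  thus ?thesis by (simp add: v_def)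
qed

lemma axis_eigenvector_column:
  assumes "X *v axis i 1 = z *s axis i 1" and "r \<noteq> i"
  shows "X $ r $ i = (0::complex)"
proof -
  have "(X *v axis i 1) $ r = (z *s axis i 1) $ r" using assms(1) by simp
  thus ?thesis using assms(2) unfolding matrix_vector_axis by (simp add: axis_def)
qed

lemma unit_vector_reflection_to_axis:
  fixes w :: "complex^'n::finite"
  assumes nw: "norm w = 1"
  obtains c H where "unitary H" "adj H = H" "H *v axis j 1 = c *s w" "H *v (c *s w) = axis j 1"
    "\<And>i. i \<noteq> j \<Longrightarrow> w $ i = 0 \<Longrightarrow> H *v axis i 1 = axis i 1"
proof
  define c where "c = (if w $ j = 0 then 1 else of_real (cmod (w $ j)) / w $ j)"
  define H where "H = house (axis j 1 - c *s w)"
  have "norm (c *s w) = 1" by (simp add: c_def norm_scale_vec nw norm_divide)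
  moreover have "(c *s w) $ j = of_real (cmod (w $ j))" by (simp add: c_def)
  ultimately show Hj: "H *v axis j 1 = c *s w" unfolding H_def by (rule house_axis)
  show "H *v (c *s w) = axis j 1" using house_involution Hj by (metis H_def)
  show "unitary H" "adj H = H" by (simp_all add: H_def unitary_house adj_house)
  fix i assume "i \<noteq> j" "w $ i = 0"
  moreover have "axis j (1::complex) $ i = 0" using \<open>i \<noteq> j\<close> by (simp add: axis_def)
  ultimately show "H *v axis i 1 = axis i 1"
    unfolding H_def by (intro house_fix) (simp add: cinner_axis_right)
qed

text \<open>Induction on the set of already diagonalised columns: an eigenvector inside the invariant
  complement is reflected onto the next coordinate axis, fixing the previous axes.\<close>
lemma unitary_diagonalizes_columns:
  fixes M :: "complex^'n::finite^'n"
  assumes herm: "hermitian M" and fin: "finite K"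
  shows "\<exists>U. unitary U \<and> (\<forall>i\<in>K. \<forall>r. r \<noteq> i \<longrightarrow> (adj U ** M ** U) $ r $ i = 0)"
  using fin
proof (induction K rule: finite_induct)
  case empty
  show ?case by (rule exI[of _ "mat 1"]) simp
next
  case (insert j K)
  from insert.IH obtain U where U: "unitary U"
    and dg: "\<forall>i\<in>K. \<forall>r. r \<noteq> i \<longrightarrow> (adj U ** M ** U) $ r $ i = 0"
    by blast
  define N where "N = adj U ** M ** U"
  have hN: "hermitian N" using herm unfolding N_def hermitian_def
    by (simp add: adj_mult matrix_mul_assoc)
  have Nii: "N *v axis i 1 = N $ i $ i *s axis i 1" if "i \<in> K" for i
  proof -
    have "(N *v axis i 1) $ r = (N $ i $ i *s axis i 1) $ r" for r
      unfolding matrix_vector_axis using dg that by (cases "r = i") (auto simp: axis_def N_def)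
    thus ?thesis by (simp add: vec_eq_iff)
  qed
  have inv: "\<forall>i\<in>K. (N *v v) $ i = 0" if "\<forall>i\<in>K. v $ i = 0" for v
  proof
    fix i assume iK: "i \<in> K"
    have "N $ i $ r * v $ r = 0" for r
      using that iK dg hermitian_entry[OF hN, of i r] by (cases "r = i") (auto simp: N_def)
    thus "(N *v v) $ i = 0" by (auto simp: matrix_vector_mult_def intro: sum.neutral)
  qed
  obtain w lam where wW: "\<forall>i\<in>K. w $ i = 0" and nw: "norm w = 1" and ev: "N *v w = lam *s w"
    using hermitian_eigenvector_in_coordinate_subspace[OF hN insert.hyps(2)] inv by blast
  obtain c H where HU: "unitary H" and adjH: "adj H = H" and Hj: "H *v axis j 1 = c *s w"
    and Hy: "H *v (c *s w) = axis j 1" and Hi: "\<And>i. i \<noteq> j \<Longrightarrow> w $ i = 0 \<Longrightarrow> H *v axis i 1 = axis i 1"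
    using unit_vector_reflection_to_axis[OF nw] by metis
  have evy: "N *v (c *s w) = lam *s (c *s w)" by (simp add: vector_scalar_commute ev mult.commute)
  have HiK: "H *v axis i 1 = axis i 1" if "i \<in> K" for i
    using that insert.hyps(2) wW by (intro Hi) auto
  define X where "X = H ** N ** H"
  have Xeq: "adj (U ** H) ** M ** (U ** H) = X"
    unfolding X_def N_def adj_mult adjH by (simp add: matrix_mul_assoc)
  have Xcol: "X *v axis i 1 = H *v (N *v (H *v axis i 1))" for i
    by (simp add: X_def matrix_vector_mul_assoc matrix_mul_assoc)
  have "X *v axis j 1 = H *v (lam *s (c *s w))" unfolding Xcol Hj evy ..
  also have "\<dots> = lam *s axis j 1" by (simp only: vector_scalar_commute[of H lam] Hy)
  finally have "X *v axis j 1 = lam *s axis j 1" .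
  moreover have "X *v axis i 1 = N $ i $ i *s axis i 1" if "i \<in> K" for i
    unfolding Xcol HiK[OF that] Nii[OF that] vector_scalar_commute HiK[OF that] ..
  ultimately have "\<forall>i\<in>insert j K. \<forall>r. r \<noteq> i \<longrightarrow> X $ r $ i = 0"
    by (metis axis_eigenvector_column insert_iff)
  with unitary_mult[OF U HU] show ?case unfolding Xeq[symmetric] by blast
qed

theorem hermitian_spectral:
  fixes M :: "complex^'n::finite^'n"
  assumes herm: "hermitian M"
  shows "\<exists>U l. unitary U \<and> M = U ** diagm l ** adj U"
proof -
  have "\<exists>U. unitary U \<and> (\<forall>i\<in>UNIV. \<forall>r. r \<noteq> i \<longrightarrow> (adj U ** M ** U) $ r $ i = 0)"
    by (rule unitary_diagonalizes_columns[OF herm]) simp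
  then obtain U where U: "unitary U"
    and dg: "\<forall>i\<in>UNIV. \<forall>r. r \<noteq> i \<longrightarrow> (adj U ** M ** U) $ r $ i = 0"
    by blast
  define N where "N = adj U ** M ** U"
  have hN: "hermitian N" using herm unfolding N_def hermitian_def
    by (simp add: adj_mult matrix_mul_assoc)
  have off: "N $ r $ i = 0" if "r \<noteq> i" for r i using dg that unfolding N_def by blast
  have "N $ r $ i = diagm (\<lambda>i. Re (N $ i $ i)) $ r $ i" for r i
    using off[of r i] hermitian_diag_real[OF hN, of i] by (cases "r = i") (simp_all add: diagm_def)
  hence ND: "N = diagm (\<lambda>i. Re (N $ i $ i))" unfolding vec_eq_iff by blast
  have "U ** N ** adj U = (U ** adj U) ** M ** (U ** adj U)"
    unfolding N_def by (simp add: matrix_mul_assoc)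
  also have "\<dots> = M" using U unfolding unitary_def by simp
  finally show ?thesis using U ND by metis
qed

lemma qform_spectral:
  assumes "unitary U"
  shows "cinner x ((U ** diagm l ** adj U) *v x) =
    (\<Sum>i\<in>UNIV. of_real (l i) * of_real ((cmod ((adj U *v x) $ i))\<^sup>2))"
proof -
  define z where "z = adj U *v x"
  have "cinner x ((U ** diagm l ** adj U) *v x) = cinner x (U *v (diagm l *v z))"
    by (simp add: z_def matrix_vector_mul_assoc matrix_mul_assoc)
  also have "\<dots> = cinner z (diagm l *v z)"
    using cinner_adj[of x "adj U"] by (simp add: z_def)
  also have "\<dots> = (\<Sum>i\<in>UNIV. of_real (l i) * (cnj (z $ i) * z $ i))"
    by (simp add: cinner_def diagm_mult_vec_entry algebra_simps)
  moreover have "cnj w * w = (of_real (cmod w))\<^sup>2" for w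
    by (metis complex_norm_square mult.commute of_real_power)
  ultimately show ?thesis by (simp add: z_def)
qed

lemma psd_spectral_form:
  assumes U: "unitary U" and l: "\<And>i. 0 \<le> l i"
  shows "psd (U ** diagm l ** adj U)"
  unfolding psd_iff qform_spectral[OF U]
  by (simp add: hermitian_spectral_form sum_nonneg l del: of_real_power)

theorem psd_spectral:
  fixes M :: "complex^'n::finite^'n"
  assumes psd: "psd M"
  shows "\<exists>U l. unitary U \<and> M = U ** diagm l ** adj U \<and> (\<forall>i. 0 \<le> l i)"
proof -
  obtain U l where U: "unitary U" and M: "M = U ** diagm l ** adj U"
    using hermitian_spectral psd psd_def by blast
  have "0 \<le> l i" for i
  proof -
    have "0 \<le> Re (cinner (U *v axis i 1) (M *v (U *v axis i 1)))"
      using psd by (simp add: psd_iff)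
    also have "cinner (U *v axis i 1) (M *v (U *v axis i 1)) =
        cinner (axis i 1) ((adj U ** M ** U) *v axis i 1)"
      by (metis cinner_adj matrix_vector_mul_assoc)
    also have "adj U ** M ** U = diagm l"
      using U unfolding M unitary_def
      by (metis matrix_mul_assoc matrix_mul_lid matrix_mul_rid)
    finally show ?thesis by (simp add: cinner_axis_left matrix_vector_axis diagm_def)
  qed
  thus ?thesis using U M by blast
qed

section \<open>Traces, positivity and matrix powers\<close>

lemma mtrace_mult_commute: "mtrace (A ** B) = mtrace (B ** A)"
  unfolding mtrace_def matrix_matrix_mult_def
  by (simp add: mult.commute) (rule sum.swap)

lemma mtrace_unitary_conj:
  assumes "unitary U"
  shows "mtrace (adj U ** R ** U) = mtrace R"
  using assms mtrace_mult_commute[of "adj U ** R" U]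
  by (simp add: unitary_def matrix_mul_assoc)

lemma mtrace_spectral:
  assumes "unitary U"
  shows "mtrace (U ** diagm l ** adj U) = (\<Sum>i\<in>UNIV. of_real (l i))"
  using mtrace_unitary_conj[of "adj U" "diagm l"] assms
  by (simp add: unitary_def mtrace_def diagm_def)

lemma hermitian_mpow: "hermitian M \<Longrightarrow> hermitian (mpow M x)"
  using hermitian_spectral mpow_spectral hermitian_spectral_form by metis

lemma psd_conj:
  assumes R: "psd R"
  shows "psd (adj X ** R ** X)"
  unfolding psd_iff
proof (intro conjI allI)
  show "hermitian (adj X ** R ** X)"
    using R by (simp add: psd_def hermitian_def adj_mult matrix_mul_assoc)
  fix v
  have "cinner v ((adj X ** R ** X) *v v) = cinner (X *v v) (R *v (X *v v))"
    by (simp add: matrix_vector_mul_assoc[symmetric] cinner_adj)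
  thus "0 \<le> Re (cinner v ((adj X ** R ** X) *v v))" using R by (simp add: psd_iff)
qed

lemma psd_sandwich: "psd R \<Longrightarrow> hermitian S \<Longrightarrow> psd (S ** R ** S)"
  using psd_conj[of R S] by (simp add: hermitian_def)

lemma psd_diag_nonneg: "psd P \<Longrightarrow> 0 \<le> Re (P $ i $ i)"
  by (metis cinner_axis_left matrix_vector_axis psd_iff)

lemma psd_zero_diag:
  assumes P: "psd P" and z: "P $ i $ i = 0"
  shows "P $ i $ j = 0"
proof -
  have hP: "hermitian P" using P by (simp add: psd_def)
  have "cinner (P *v axis i 1) (P *v axis i 1) = 0"
  proof (rule nonneg_form_null_orth[OF hP, of UNIV])
    show "0 \<le> Re (cinner u (P *v u))" for u using P by (simp add: psd_iff)
    show "Re (cinner (axis i 1) (P *v axis i 1)) = 0"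
      unfolding cinner_axis_left matrix_vector_axis z by simp
  qed auto
  hence "P $ j $ i = 0" using matrix_vector_axis[of P i j] by (simp add: cinner_self_eq_0_iff)
  thus ?thesis using hermitian_entry[OF hP, of i j] by simp
qed

lemma mtrace_mpow_pos:
  assumes Y: "psd Y" and Y0: "Y \<noteq> 0"
  shows "0 < Re (mtrace (mpow Y a))"
proof -
  obtain U l where U: "unitary U" and M: "Y = U ** diagm l ** adj U" and l: "\<And>i. 0 \<le> l i"
    using psd_spectral[OF Y] by blast
  have "\<exists>i. l i \<noteq> 0"
  proof (rule ccontr)
    assume "\<nexists>i. l i \<noteq> 0"
    hence "diagm l = 0" by (simp add: vec_eq_iff diagm_def)
    thus False using Y0 M by simp
  qed
  then obtain i where "l i \<noteq> 0" ..
  hence li: "0 < l i" using l by (metis order_le_less)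
  have "l i powr a \<le> (\<Sum>j\<in>UNIV. l j powr a)"
    by (rule member_le_sum) auto
  also have "\<dots> = Re (mtrace (mpow Y a))"
    unfolding mpow_spectral[OF U M] mtrace_spectral[OF U] by simp
  finally show ?thesis using li by (smt (verit) powr_gt_zero)
qed

section \<open>Real multiples and block-diagonal matrices\<close>

definition smat :: "real \<Rightarrow> ('n::finite) cmat \<Rightarrow> 'n cmat" where
  "smat c M = (\<chi> i j. of_real c * M $ i $ j)"

lemma smat_entry: "smat c M $ i $ j = of_real c * M $ i $ j"
  by (simp add: smat_def)

lemma smat_mult_left: "smat c A ** B = smat c (A ** B)"
  by (simp add: vec_eq_iff smat_entry matrix_matrix_mult_def sum_distrib_left mult.assoc)

lemma smat_mult_right: "A ** smat c B = smat c (A ** B)"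
  by (simp add: vec_eq_iff smat_entry matrix_matrix_mult_def sum_distrib_left mult.left_commute)

lemma smat_smat: "smat c (smat d A) = smat (c * d) A"
  by (simp add: vec_eq_iff smat_entry mult.assoc)

lemma smat_mult3: "smat c1 A ** smat c2 B ** smat c3 C = smat (c1 * c2 * c3) (A ** B ** C)"
  by (simp add: smat_mult_left smat_mult_right smat_smat mult_ac)

lemma hermitian_smat: "hermitian M \<Longrightarrow> hermitian (smat c M)"
  by (simp add: hermitian_def adj_def smat_def vec_eq_iff)

lemma mtrace_smat: "mtrace (smat c A) = of_real c * mtrace A"
  by (simp add: mtrace_def smat_entry sum_distrib_left)

lemma smat_matrix_vector: "smat c A *v u = of_real c *s (A *v u)"
  by (simp add: vec_eq_iff smat_entry matrix_vector_mult_def sum_distrib_left mult.assoc)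

lemma smat_spectral: "smat c (U ** diagm l ** adj U) = U ** diagm (\<lambda>i. c * l i) ** adj U"
proof -
  have "smat c (diagm l) = diagm (\<lambda>i. c * l i)"
    by (simp add: vec_eq_iff smat_entry diagm_def)
  thus ?thesis by (metis smat_mult_left smat_mult_right)
qed

lemma mpow_smat:
  assumes psd: "psd M" and c: "0 \<le> c"
  shows "mpow (smat c M) x = smat (c powr x) (mpow M x)"
proof -
  obtain U l where U: "unitary U" and M: "M = U ** diagm l ** adj U" and l: "\<And>i. 0 \<le> l i"
    using psd_spectral[OF psd] by blast
  have "mpow (smat c M) x = U ** diagm (\<lambda>i. (c * l i) powr x) ** adj U"
    unfolding M smat_spectral by (rule mpow_spectral[OF U refl])
  also have "\<dots> = U ** diagm (\<lambda>i. c powr x * l i powr x) ** adj U"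
    using c l by (simp add: powr_mult)
  also have "\<dots> = smat (c powr x) (mpow M x)"
    unfolding mpow_spectral[OF U M] smat_spectral ..
  finally show ?thesis .
qed

lemma supp_smat_mono:
  assumes RK: "supp R \<subseteq> supp K" and pq: "p = 0 \<or> 0 < q"
  shows "supp (smat p R) \<subseteq> supp (smat q K)"
proof
  fix y assume "y \<in> supp (smat p R)"
  then obtain u where y: "y = smat p R *v u" by (auto simp: supp_def)
  show "y \<in> supp (smat q K)"
  proof (cases "p = 0")
    case True
    hence "y = smat q K *v 0" using y by (simp add: smat_matrix_vector)
    thus ?thesis unfolding supp_def by (metis rangeI)
  next
    case False
    hence q0: "0 < q" using pq by simp
    obtain w where w: "R *v u = K *v w" using RK by (auto simp: supp_def)
    have "of_real (p / q) * of_real q = (of_real p :: complex)"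
      using q0 by (metis nonzero_eq_divide_eq of_real_mult order_less_irrefl)
    hence "smat q K *v (of_real (p / q) *s w) = y"
      unfolding y smat_matrix_vector vector_scalar_commute w vector_smult_assoc by simp
    thus ?thesis unfolding supp_def by (metis rangeI)
  qed
qed

lemma sum_if_zero: "(\<Sum>x\<in>A. if P then f x else 0) = (if P then sum f A else 0)"
  by simp

lemma sum_UNIV_pair:
  "(\<Sum>x\<in>(UNIV::('a::finite \<times> 'b::finite) set). f x) = (\<Sum>a\<in>UNIV. \<Sum>b\<in>UNIV. f (a, b))"
proof -
  have "(\<Sum>a\<in>UNIV. \<Sum>b\<in>UNIV. f (a, b)) = (\<Sum>(a, b)\<in>UNIV \<times> UNIV. f (a, b))"
    by (rule sum.cartesian_product)
  thus ?thesis by simp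
qed

lemma sum_UNIV_triple:
  "(\<Sum>x\<in>(UNIV::('a::finite \<times> 'b::finite \<times> 'c::finite) set). f x) =
    (\<Sum>b\<in>UNIV. \<Sum>a\<in>UNIV. \<Sum>c\<in>UNIV. f (a, b, c))"
  unfolding sum_UNIV_pair by (rule sum.swap)

text \<open>\<open>blk F\<close> is \<open>\<Sum>\<^sub>b |b\<rangle>\<langle>b|\<^sub>B \<otimes> F b\<close>, with the classical register \<open>B\<close> placed
  in the middle of the index type \<open>'a \<times> 'b \<times> 'c\<close> as in \<^const>\<open>cq_state\<close>.\<close>
definition blk :: "('b::finite \<Rightarrow> ('a::finite \<times> 'c::finite) cmat) \<Rightarrow> ('a \<times> 'b \<times> 'c) cmat" where
  "blk F = (\<chi> x y. case x of (a, b, c) \<Rightarrow> case y of (a', b', c') \<Rightarrow>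
      if b = b' then F b $ (a, c) $ (a', c') else 0)"

lemma blk_entry: "blk F $ (a, b, c) $ (a', b', c') = (if b = b' then F b $ (a, c) $ (a', c') else 0)"
  by (simp add: blk_def)

lemma blk_mult: "blk F ** blk G = blk (\<lambda>b. F b ** G b)"
proof -
  have "(blk F ** blk G) $ (a, b, c) $ (a', b', c') = blk (\<lambda>b. F b ** G b) $ (a, b, c) $ (a', b', c')"
    for a b c a' b' c'
  proof -
    have "(blk F ** blk G) $ (a, b, c) $ (a', b', c') = (\<Sum>b2\<in>UNIV. \<Sum>a2\<in>UNIV. \<Sum>c2\<in>UNIV.
        blk F $ (a, b, c) $ (a2, b2, c2) * blk G $ (a2, b2, c2) $ (a', b', c'))"
      by (simp add: matrix_matrix_mult_def sum_UNIV_triple)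
    also have "\<dots> = (\<Sum>b2\<in>UNIV. if b2 = b then (\<Sum>a2\<in>UNIV. \<Sum>c2\<in>UNIV.
        F b $ (a, c) $ (a2, c2) * blk G $ (a2, b, c2) $ (a', b', c')) else 0)"
      by (intro sum.cong refl) (auto simp: blk_entry)
    also have "\<dots> = blk (\<lambda>b. F b ** G b) $ (a, b, c) $ (a', b', c')"
      by (simp add: blk_entry matrix_matrix_mult_def sum_UNIV_pair)
    finally show ?thesis .
  qed
  thus ?thesis by (simp add: vec_eq_iff split_paired_all)
qed

lemma adj_blk: "adj (blk F) = blk (\<lambda>b. adj (F b))"
  by (simp add: vec_eq_iff split_paired_all blk_entry adj_def)

lemma blk_mat1: "blk (\<lambda>b. mat 1) = mat 1"
  by (simp add: vec_eq_iff split_paired_all blk_entry mat_def)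

lemma unitary_blk: "(\<And>b. unitary (F b)) \<Longrightarrow> unitary (blk F)"
  by (simp add: unitary_def adj_blk blk_mult blk_mat1)

lemma mtrace_blk: "mtrace (blk F) = (\<Sum>b\<in>UNIV. mtrace (F b))"
  by (simp add: mtrace_def sum_UNIV_triple blk_entry sum_UNIV_pair)

lemma blk_spectral:
  "blk (\<lambda>b. U b ** diagm (l b) ** adj (U b)) =
    blk U ** diagm (\<lambda>(a, b, c). l b (a, c)) ** adj (blk U)"
proof -
  have "diagm (\<lambda>(a, b, c). l b (a, c)) = blk (\<lambda>b. diagm (l b))"
    by (simp add: vec_eq_iff split_paired_all blk_entry diagm_def)
  thus ?thesis by (simp add: adj_blk blk_mult)
qed

lemma mat_fun_blk:
  assumes "\<And>b. hermitian (F b)"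
  shows "mat_fun f (blk F) = blk (\<lambda>b. mat_fun f (F b))"
proof -
  obtain U l where U: "\<And>b. unitary (U b)" and F: "\<And>b. F b = U b ** diagm (l b) ** adj (U b)"
    using hermitian_spectral[OF assms] by metis
  have "F = (\<lambda>b. U b ** diagm (l b) ** adj (U b))" by (simp add: fun_eq_iff F)
  hence "mat_fun f (blk F) = blk U ** diagm (f \<circ> (\<lambda>(a, b, c). l b (a, c))) ** adj (blk U)"
    by (intro mat_fun_spectral[OF unitary_blk[OF U]]) (simp add: blk_spectral)
  also have "f \<circ> (\<lambda>(a, b, c). l b (a, c)) = (\<lambda>(a, b, c). (f \<circ> l b) (a, c))"
    by (auto simp: fun_eq_iff)
  also have "blk U ** diagm \<dots> ** adj (blk U) = blk (\<lambda>b. U b ** diagm (f \<circ> l b) ** adj (U b))"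
    by (rule blk_spectral[symmetric])
  finally show ?thesis using mat_fun_spectral[OF U F] by simp
qed

lemma mpow_blk_smat:
  assumes "\<And>b. psd (F b)" and "\<And>b. 0 \<le> c b"
  shows "mpow (blk (\<lambda>b. smat (c b) (F b))) x = blk (\<lambda>b. smat (c b powr x) (mpow (F b) x))"
  using assms unfolding mpow_def
  by (simp add: mat_fun_blk hermitian_smat psd_def mpow_smat[unfolded mpow_def])

lemma blk_matrix_vector:
  "(blk F *v u) $ (a, b, c) = (F b *v (\<chi> z. u $ (fst z, b, snd z))) $ (a, c)"
  by (simp add: matrix_vector_mult_def sum_UNIV_triple sum_UNIV_pair blk_entry
      if_distrib if_distribR sum_if_zero sum.delta' cong: if_cong)

lemma supp_blk_mono:
  fixes F G :: "'b::finite \<Rightarrow> ('a::finite \<times> 'c::finite) cmat"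
  assumes "\<And>b. supp (F b) \<subseteq> supp (G b)"
  shows "supp (blk F) \<subseteq> supp (blk G)"
proof
  fix y assume "y \<in> supp (blk F)"
  then obtain u where y: "y = blk F *v u" by (auto simp: supp_def)
  define ub where "ub = (\<lambda>b. (\<chi> z. u $ (fst z, b, snd z)) :: complex^('a \<times> 'c))"
  have "\<forall>b. \<exists>w. G b *v w = F b *v ub b"
  proof
    fix b
    have "F b *v ub b \<in> supp (G b)" using assms[of b] by (auto simp: supp_def)
    thus "\<exists>w. G b *v w = F b *v ub b" by (auto simp: supp_def)
  qed
  then obtain W where W: "\<And>b. G b *v W b = F b *v ub b" by metis
  define w :: "complex^('a \<times> 'b \<times> 'c)" where "w = (\<chi> x. case x of (a, b, c) \<Rightarrow> W b $ (a, c))"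
  have "(\<chi> z. w $ (fst z, b, snd z)) = W b" for b
    by (simp add: vec_eq_iff w_def split_paired_all)
  hence "blk G *v w = y"
    unfolding y by (simp add: vec_eq_iff split_paired_all blk_matrix_vector W ub_def)
  thus "y \<in> supp (blk G)" unfolding supp_def by (metis rangeI)
qed

lemma supp_blk_smat_weight_pos:
  fixes R S :: "'b::finite \<Rightarrow> ('a::finite \<times> 'c::finite) cmat"
  assumes sub: "supp (blk (\<lambda>b. smat (p b) (R b))) \<subseteq> supp (blk (\<lambda>b. smat (q b) (S b)))"
    and R: "R b \<noteq> 0" and p: "p b \<noteq> 0"
  shows "q b \<noteq> 0"
proof
  assume q: "q b = 0"
  obtain i j where Rij: "R b $ i $ j \<noteq> 0"
    using R by (metis vec_eq_iff zero_index)
  define y where "y = blk (\<lambda>b. smat (p b) (R b)) *v axis (fst j, b, snd j) 1"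
  have "y \<in> supp (blk (\<lambda>b. smat (q b) (S b)))"
    using sub unfolding y_def supp_def by blast
  then obtain w where "y = blk (\<lambda>b. smat (q b) (S b)) *v w" by (auto simp: supp_def)
  hence "y $ (fst i, b, snd i) = 0"
    by (simp add: blk_matrix_vector q smat_matrix_vector)
  moreover have "(\<chi> z. axis (fst j, b, snd j) 1 $ (fst z, b, snd z)) = axis j (1::complex)"
    by (auto simp: vec_eq_iff axis_def prod_eq_iff)
  hence "y $ (fst i, b, snd i) = of_real (p b) * R b $ i $ j"
    unfolding y_def blk_matrix_vector by (simp add: matrix_vector_axis smat_entry)
  ultimately show False using Rij p by simp
qed

section \<open>The identity tensored with a partial trace\<close>

lemma kron_entry: "kron X Y $ (a, c) $ (a', c') = X $ a $ a' * Y $ c $ c'"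
  by (simp add: kron_def)

lemma kron_mat1_entry: "kron (mat 1) A $ (a, c) $ (a', c') = (if a = a' then A $ c $ c' else 0)"
  by (simp add: kron_entry mat_def)

lemma kron_mult: "kron A B ** kron C D = kron (A ** C) (B ** D)"
proof -
  have "(kron A B ** kron C D) $ (a, c) $ (a', c') = kron (A ** C) (B ** D) $ (a, c) $ (a', c')"
    for a c a' c'
  proof -
    have "(kron A B ** kron C D) $ (a, c) $ (a', c') =
        (\<Sum>a2\<in>UNIV. \<Sum>c2\<in>UNIV. (A $ a $ a2 * C $ a2 $ a') * (B $ c $ c2 * D $ c2 $ c'))"
      by (simp add: matrix_matrix_mult_def sum_UNIV_pair kron_entry mult_ac)
    thus ?thesis by (simp add: kron_entry matrix_matrix_mult_def sum_product)
  qed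
  thus ?thesis by (simp add: vec_eq_iff split_paired_all)
qed

lemma adj_kron: "adj (kron A B) = kron (adj A) (adj B)"
  by (simp add: vec_eq_iff split_paired_all kron_entry adj_def)

lemma unitary_kron_mat1: "unitary V \<Longrightarrow> unitary (kron (mat 1 :: ('a::finite) cmat) V)"
proof -
  have "kron (mat 1 :: 'a cmat) (mat 1) = mat 1"
    by (simp add: vec_eq_iff split_paired_all kron_entry mat_def)
  thus "unitary V \<Longrightarrow> unitary (kron (mat 1 :: 'a cmat) V)"
    by (simp add: unitary_def adj_kron kron_mult)
qed

lemma kron_mat1_spectral:
  "kron (mat 1 :: ('a::finite) cmat) (V ** diagm m ** adj V) =
     kron (mat 1 :: 'a cmat) V ** diagm (\<lambda>(a::'a, c). m c) ** adj (kron (mat 1 :: 'a cmat) V)"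
proof -
  have "kron (mat 1 :: 'a cmat) (diagm m) = diagm (\<lambda>(a::'a, c). m c)"
    by (simp add: vec_eq_iff split_paired_all kron_entry mat_def diagm_def)
  thus ?thesis by (simp add: adj_kron kron_mult flip: \<open>kron (mat 1) (diagm m) = _\<close>)
qed

lemma ptrace1_kron_mult_left: "ptrace1 (kron (mat 1 :: ('a::finite) cmat) A ** R) = A ** ptrace1 R"
proof -
  have "ptrace1 (kron (mat 1 :: 'a cmat) A ** R) $ c $ c' =
      (\<Sum>a\<in>UNIV. \<Sum>c2\<in>UNIV. A $ c $ c2 * R $ (a, c2) $ (a, c'))" for c c'
    by (simp add: ptrace1_def matrix_matrix_mult_def sum_UNIV_pair kron_mat1_entry
        if_distrib if_distribR sum_if_zero sum.delta sum.delta' cong: if_cong)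
  also have "\<dots> c c' = (\<Sum>c2\<in>UNIV. \<Sum>a\<in>UNIV. A $ c $ c2 * R $ (a, c2) $ (a, c'))" for c c'
    by (rule sum.swap)
  finally show ?thesis
    by (simp add: vec_eq_iff ptrace1_def matrix_matrix_mult_def sum_distrib_left)
qed

lemma ptrace1_kron_mult_right: "ptrace1 (R ** kron (mat 1 :: ('a::finite) cmat) B) = ptrace1 R ** B"
proof -
  have "ptrace1 (R ** kron (mat 1 :: 'a cmat) B) $ c $ c' =
      (\<Sum>a\<in>UNIV. \<Sum>c2\<in>UNIV. R $ (a, c) $ (a, c2) * B $ c2 $ c')" for c c'
    by (simp add: ptrace1_def matrix_matrix_mult_def sum_UNIV_pair kron_mat1_entry
        if_distrib if_distribR sum_if_zero sum.delta sum.delta' cong: if_cong)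
  also have "\<dots> c c' = (\<Sum>c2\<in>UNIV. \<Sum>a\<in>UNIV. R $ (a, c) $ (a, c2) * B $ c2 $ c')" for c c'
    by (rule sum.swap)
  finally show ?thesis
    by (simp add: vec_eq_iff ptrace1_def matrix_matrix_mult_def sum_distrib_right)
qed

lemma hermitian_ptrace1: "hermitian R \<Longrightarrow> hermitian (ptrace1 R)"
  unfolding hermitian_def by (simp add: vec_eq_iff adj_def ptrace1_def)

text \<open>In an eigenbasis of \<open>I\<^sub>A \<otimes> tr\<^sub>A R\<close> each eigenvalue is a sum of nonnegative diagonal
  entries of \<open>R\<close>, so these entries vanish on the kernel.\<close>
lemma kron_ptrace1_eigenbasis:
  fixes R :: "('a::finite \<times> 'c::finite) cmat"
  assumes R: "psd R"
  obtains Z m where "unitary Z" "kron (mat 1 :: 'a cmat) (ptrace1 R) = Z ** diagm m ** adj Z"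
    "\<And>i. 0 \<le> m i" "\<And>i. m i = 0 \<Longrightarrow> (adj Z ** R ** Z) $ i $ i = 0"
proof -
  obtain V \<mu> where V: "unitary V" and PR: "ptrace1 R = V ** diagm \<mu> ** adj V"
    using hermitian_spectral hermitian_ptrace1 R psd_def by metis
  define Z where "Z = kron (mat 1 :: 'a cmat) V"
  define R' where "R' = adj Z ** R ** Z"
  have pR': "psd R'" unfolding R'_def by (rule psd_conj[OF R])
  have PR': "ptrace1 R' = diagm \<mu>"
    unfolding R'_def Z_def adj_kron adj_mat1 ptrace1_kron_mult_left ptrace1_kron_mult_right PR
    by (simp add: matrix_mul_assoc unitary_simps[OF V])
  have mu_sum: "\<mu> k = (\<Sum>a\<in>UNIV. Re (R' $ (a, k) $ (a, k)))" for k
  proof -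
    have "of_real (\<mu> k) = ptrace1 R' $ k $ k" unfolding PR' by (simp add: diagm_def)
    hence "Re (of_real (\<mu> k)) = Re (\<Sum>a\<in>UNIV. R' $ (a, k) $ (a, k))" by (simp add: ptrace1_def)
    thus ?thesis by (simp add: Re_sum)
  qed
  show ?thesis
  proof
    show "unitary Z" unfolding Z_def by (rule unitary_kron_mat1[OF V])
    show "kron (mat 1 :: 'a cmat) (ptrace1 R) = Z ** diagm (\<lambda>(a, k). \<mu> k) ** adj Z"
      unfolding PR Z_def by (rule kron_mat1_spectral)
    show "0 \<le> (\<lambda>(a, k). \<mu> k) i" for i
      unfolding mu_sum by (auto intro!: sum_nonneg psd_diag_nonneg[OF pR'] split: prod.split)
    fix i assume "(\<lambda>(a::'a, k). \<mu> k) i = 0"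
    then obtain a k where i: "i = (a, k)" and "(\<Sum>a\<in>UNIV. Re (R' $ (a, k) $ (a, k))) = 0"
      unfolding mu_sum by (auto split: prod.splits)
    hence "Re (R' $ i $ i) = 0"
      using sum_nonneg_eq_0_iff[of UNIV "\<lambda>a. Re (R' $ (a, k) $ (a, k))"] psd_diag_nonneg[OF pR']
      by simp
    thus "(adj Z ** R ** Z) $ i $ i = 0"
      using hermitian_diag_real[of R' i] pR' unfolding R'_def psd_def by simp
  qed
qed

lemma psd_kron_ptrace1:
  fixes R :: "('a::finite \<times> 'c::finite) cmat"
  assumes "psd R"
  shows "psd (kron (mat 1 :: 'a cmat) (ptrace1 R))"
proof -
  obtain Z m where "unitary Z" "kron (mat 1 :: 'a cmat) (ptrace1 R) = Z ** diagm m ** adj Z"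
    "\<And>i. 0 \<le> m i"
    using kron_ptrace1_eigenbasis[OF assms] by metis
  thus ?thesis by (simp add: psd_spectral_form)
qed

text \<open>Preimages are built in the eigenbasis by dividing by the nonzero eigenvalues.\<close>
lemma supp_le_kron_ptrace1:
  fixes R :: "('a::finite \<times> 'c::finite) cmat"
  assumes R: "psd R"
  shows "supp R \<subseteq> supp (kron (mat 1 :: 'a cmat) (ptrace1 R))"
proof
  obtain Z m where Z: "unitary Z" and KZ: "kron (mat 1 :: 'a cmat) (ptrace1 R) = Z ** diagm m ** adj Z"
    and zero: "\<And>i. m i = 0 \<Longrightarrow> (adj Z ** R ** Z) $ i $ i = 0"
    using kron_ptrace1_eigenbasis[OF R] by metis
  define R' where "R' = adj Z ** R ** Z"
  have pR': "psd R'" unfolding R'_def by (rule psd_conj[OF R])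
  fix y assume "y \<in> supp R"
  then obtain u where y: "y = R *v u" by (auto simp: supp_def)
  define d where "d = adj Z *v y"
  have "adj Z ** R = R' ** adj Z" unfolding R'_def by (simp add: matrix_mul_assoc unitary_simps[OF Z])
  hence "d = R' *v (adj Z *v u)" unfolding d_def y by (simp add: matrix_vector_mul_assoc)
  hence dz: "d $ i = 0" if "m i = 0" for i
    unfolding matrix_vector_mult_def using psd_zero_diag[OF pR' zero[OF that, folded R'_def]] by simp
  define w where "w = Z *v (diagm (\<lambda>i. if m i = 0 then 0 else 1 / m i) *v d)"
  have dd: "diagm m *v (diagm (\<lambda>i. if m i = 0 then 0 else 1 / m i) *v d) = d"
    using dz by (simp add: vec_eq_iff diagm_mult_vec_entry flip: of_real_mult)
  have "kron (mat 1 :: 'a cmat) (ptrace1 R) *v w =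
      Z *v (diagm m *v (diagm (\<lambda>i. if m i = 0 then 0 else 1 / m i) *v d))"
    unfolding KZ w_def by (simp add: matrix_vector_mul_assoc matrix_mul_assoc unitary_simps[OF Z])
  also have "\<dots> = Z *v d" unfolding dd ..
  also have "\<dots> = y" unfolding d_def by (simp add: matrix_vector_mul_assoc unitary_simps[OF Z])
  finally show "y \<in> supp (kron (mat 1 :: 'a cmat) (ptrace1 R))"
    unfolding supp_def by (metis rangeI)
qed

text \<open>In the eigenbasis the sandwich multiplies the diagonal entry \<open>i\<close> of \<open>R\<close> by \<open>m\<^sub>i\<^bsup>2x\<^esup>\<close>,
  which is positive wherever that entry can be nonzero; so a vanishing sandwich would force
  \<open>tr R = 0\<close>.\<close>
lemma sandwich_kron_ptrace1_nonzero:
  fixes R :: "('a::finite \<times> 'c::finite) cmat"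
  assumes R: "psd R" and tr: "mtrace R \<noteq> 0"
  shows "mpow (kron (mat 1 :: 'a cmat) (ptrace1 R)) x ** R ** mpow (kron (mat 1 :: 'a cmat) (ptrace1 R)) x \<noteq> 0"
proof
  obtain Z m where Z: "unitary Z" and KZ: "kron (mat 1 :: 'a cmat) (ptrace1 R) = Z ** diagm m ** adj Z"
    and m0: "\<And>i. 0 \<le> m i" and zero: "\<And>i. m i = 0 \<Longrightarrow> (adj Z ** R ** Z) $ i $ i = 0"
    using kron_ptrace1_eigenbasis[OF R] by metis
  define R' where "R' = adj Z ** R ** Z"
  define mx where "mx = (\<lambda>i. m i powr x)"
  assume "mpow (kron (mat 1 :: 'a cmat) (ptrace1 R)) x ** R ** mpow (kron (mat 1 :: 'a cmat) (ptrace1 R)) x = 0"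
  hence "adj Z ** (Z ** diagm mx ** adj Z ** R ** (Z ** diagm mx ** adj Z)) ** Z = 0"
    unfolding mpow_spectral[OF Z KZ] mx_def by simp
  hence E: "diagm mx ** R' ** diagm mx = 0"
    unfolding R'_def by (simp add: matrix_mul_assoc unitary_simps[OF Z])
  have "R' $ i $ i = 0" for i
  proof (cases "m i = 0")
    case False
    hence "0 < mx i" using m0[of i] by (simp add: mx_def)
    moreover have "of_real (mx i) * R' $ i $ i * of_real (mx i) = 0"
      using arg_cong[OF E, of "\<lambda>X. X $ i $ i"] by simp
    ultimately show ?thesis by simp
  qed (use zero R'_def in simp)
  hence "mtrace R' = 0" by (simp add: mtrace_def)
  thus False unfolding R'_def mtrace_unitary_conj[OF Z] using tr by simp
qed

section \<open>Sandwiched traces of classical-quantum states\<close>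

definition sandwiched_trace :: "real \<Rightarrow> ('n::finite) cmat \<Rightarrow> 'n cmat \<Rightarrow> real" where
  "sandwiched_trace \<alpha> \<rho> \<sigma> =
    Re (mtrace (mpow (mpow \<sigma> ((1 - \<alpha>) / (2 * \<alpha>)) ** \<rho> ** mpow \<sigma> ((1 - \<alpha>) / (2 * \<alpha>))) \<alpha>))"

lemma renyi_D_sandwiched_trace:
  "renyi_D \<alpha> \<rho> \<sigma> = (if supp \<rho> \<subseteq> supp \<sigma>
    then ereal (1 / (\<alpha> - 1) * log 2 (sandwiched_trace \<alpha> \<rho> \<sigma> / Re (mtrace \<rho>))) else \<infinity>)"
  by (simp add: renyi_D_def sandwiched_trace_def)

lemma sandwiched_trace_kron_ptrace1_pos:
  fixes R :: "('a::finite \<times> 'c::finite) cmat"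
  assumes "density_op R"
  shows "0 < sandwiched_trace \<alpha> R (kron (mat 1 :: 'a cmat) (ptrace1 R))"
proof -
  have R: "psd R" and "mtrace R \<noteq> 0" using assms by (auto simp: density_op_def)
  have "hermitian (mpow (kron (mat 1 :: 'a cmat) (ptrace1 R)) x)" for x
    using psd_kron_ptrace1[OF R] hermitian_mpow psd_def by blast
  thus ?thesis unfolding sandwiched_trace_def
    by (intro mtrace_mpow_pos psd_sandwich[OF R] sandwich_kron_ptrace1_nonzero[OF R] \<open>mtrace R \<noteq> 0\<close>)
qed

lemma powr_cond_H_down:
  fixes R :: "('a::finite \<times> 'c::finite) cmat"
  assumes R: "density_op R" and \<alpha>: "1 < \<alpha>"
  shows "2 powr ((1 - \<alpha>) / \<alpha> * real_of_ereal (cond_H_down \<alpha> R)) =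
    sandwiched_trace \<alpha> R (kron (mat 1 :: 'a cmat) (ptrace1 R)) powr (1 / \<alpha>)"
proof -
  define Q where "Q = sandwiched_trace \<alpha> R (kron (mat 1 :: 'a cmat) (ptrace1 R))"
  have "supp R \<subseteq> supp (kron (mat 1 :: 'a cmat) (ptrace1 R))" and "mtrace R = 1"
    using R supp_le_kron_ptrace1 by (auto simp: density_op_def)
  hence e: "(1 - \<alpha>) / \<alpha> * real_of_ereal (cond_H_down \<alpha> R) = log 2 Q * (1 / \<alpha>)"
    using \<alpha> by (simp add: cond_H_down_def renyi_D_sandwiched_trace Q_def field_simps)
  have "2 powr ((1 - \<alpha>) / \<alpha> * real_of_ereal (cond_H_down \<alpha> R)) = (2 powr log 2 Q) powr (1 / \<alpha>)"
    unfolding e powr_powr ..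
  also have "2 powr log 2 Q = Q"
    unfolding Q_def using sandwiched_trace_kron_ptrace1_pos[OF R] by simp
  finally show ?thesis unfolding Q_def .
qed

lemma sandwiched_trace_blk_smat:
  fixes \<alpha> :: real
  assumes R: "\<And>b. psd (R b)" and S: "\<And>b. psd (S b)" and p: "\<And>b. 0 \<le> p b" and q: "\<And>b. 0 \<le> q b"
  defines "x \<equiv> (1 - \<alpha>) / (2 * \<alpha>)"
  shows "sandwiched_trace \<alpha> (blk (\<lambda>b. smat (p b) (R b))) (blk (\<lambda>b. smat (q b) (S b))) =
    (\<Sum>b\<in>UNIV. (q b powr x * p b * q b powr x) powr \<alpha> * sandwiched_trace \<alpha> (R b) (S b))"
proof -
  define Y where "Y = (\<lambda>b. mpow (S b) x ** R b ** mpow (S b) x)"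
  have Y: "psd (Y b)" for b
    unfolding Y_def using S by (intro psd_sandwich R hermitian_mpow) (simp add: psd_def)
  have "mpow (blk (\<lambda>b. smat (q b) (S b))) x ** blk (\<lambda>b. smat (p b) (R b)) **
      mpow (blk (\<lambda>b. smat (q b) (S b))) x = blk (\<lambda>b. smat (q b powr x * p b * q b powr x) (Y b))"
    unfolding mpow_blk_smat[OF S q] blk_mult smat_mult3 Y_def ..
  moreover have "mpow (blk (\<lambda>b. smat (q b powr x * p b * q b powr x) (Y b))) \<alpha> =
      blk (\<lambda>b. smat ((q b powr x * p b * q b powr x) powr \<alpha>) (mpow (Y b) \<alpha>))"
    using p by (intro mpow_blk_smat Y) simp
  ultimately show ?thesis
    unfolding sandwiched_trace_def x_def[symmetric] Y_def[symmetric]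
    by (simp add: mtrace_blk mtrace_smat Re_sum Y_def)
qed

lemma cq_state_blk: "cq_state p rhoc = blk (\<lambda>b. smat (p b) (rhoc b))"
  by (simp add: vec_eq_iff split_paired_all cq_state_def blk_entry smat_entry)

lemma kron_sigma_BC_blk:
  fixes rhoc :: "'b::finite \<Rightarrow> ('a::finite \<times> 'c::finite) cmat"
  shows "kron (mat 1 :: 'a cmat) (sigma_BC q rhoc) =
    blk (\<lambda>b. smat (q b) (kron (mat 1 :: 'a cmat) (ptrace1 (rhoc b))))"
  by (simp add: vec_eq_iff split_paired_all kron_entry sigma_BC_def blk_entry smat_entry mat_def)

lemma sandwich_weight_powr:
  fixes q p \<alpha> :: real
  assumes q: "0 < q" and p: "0 \<le> p" and \<alpha>: "0 < \<alpha>"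
  shows "(q powr ((1 - \<alpha>) / (2 * \<alpha>)) * p * q powr ((1 - \<alpha>) / (2 * \<alpha>))) powr \<alpha> =
    q powr (1 - \<alpha>) * p powr \<alpha>"
proof -
  have "q powr ((1 - \<alpha>) / (2 * \<alpha>)) * q powr ((1 - \<alpha>) / (2 * \<alpha>)) = q powr ((1 - \<alpha>) / \<alpha>)"
    unfolding powr_add[symmetric]
    by (rule arg_cong[where f = "\<lambda>e. q powr e"]) (use \<alpha> in \<open>simp add: field_simps\<close>)
  hence "q powr ((1 - \<alpha>) / (2 * \<alpha>)) * p * q powr ((1 - \<alpha>) / (2 * \<alpha>)) = q powr ((1 - \<alpha>) / \<alpha>) * p"
    by (metis mult.assoc mult.commute)
  moreover have "(q powr ((1 - \<alpha>) / \<alpha>) * p) powr \<alpha> = q powr (1 - \<alpha>) * p powr \<alpha>"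
    using q p \<alpha> by (simp add: powr_mult powr_powr)
  ultimately show ?thesis by (simp only:)
qed

lemma supp_cq_state_le_kron_sigma_BC_iff:
  fixes rhoc :: "'b::finite \<Rightarrow> ('a::finite \<times> 'c::finite) cmat"
  assumes p0: "\<And>b. 0 \<le> p b" and q0: "\<And>b. 0 \<le> q b"
    and R: "\<And>b. psd (rhoc b)" and R0: "\<And>b. rhoc b \<noteq> 0"
  shows "supp (cq_state p rhoc) \<subseteq> supp (kron (mat 1 :: 'a cmat) (sigma_BC q rhoc)) \<longleftrightarrow>
    (\<forall>b. 0 < p b \<longrightarrow> 0 < q b)"
  unfolding cq_state_blk kron_sigma_BC_blk
proof
  assume sub: "supp (blk (\<lambda>b. smat (p b) (rhoc b))) \<subseteq>
    supp (blk (\<lambda>b. smat (q b) (kron (mat 1 :: 'a cmat) (ptrace1 (rhoc b)))))"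
  show "\<forall>b. 0 < p b \<longrightarrow> 0 < q b"
  proof (intro allI impI)
    fix b assume "0 < p b"
    have "q b \<noteq> 0" by (rule supp_blk_smat_weight_pos[OF sub R0[of b]]) (use \<open>0 < p b\<close> in simp)
    thus "0 < q b" using q0[of b] by simp
  qed
next
  assume "\<forall>b. 0 < p b \<longrightarrow> 0 < q b"
  hence pq: "p b = 0 \<or> 0 < q b" for b using p0[of b] by (metis order_le_less)
  show "supp (blk (\<lambda>b. smat (p b) (rhoc b))) \<subseteq>
    supp (blk (\<lambda>b. smat (q b) (kron (mat 1 :: 'a cmat) (ptrace1 (rhoc b)))))"
    by (intro supp_blk_mono supp_smat_mono[OF supp_le_kron_ptrace1[OF R] pq])
qed

lemma renyi_D_cq_state_sigma_BC:
  fixes rhoc :: "'b::finite \<Rightarrow> ('a::finite \<times> 'c::finite) cmat"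
  assumes p: "p \<in> prob_dists" and q: "q \<in> prob_dists"
    and rho: "\<And>b. density_op (rhoc b)" and \<alpha>: "1 < \<alpha>"
  defines "a \<equiv> \<lambda>b. p b * sandwiched_trace \<alpha> (rhoc b) (kron (mat 1 :: 'a cmat) (ptrace1 (rhoc b))) powr (1 / \<alpha>)"
  shows "renyi_D \<alpha> (cq_state p rhoc) (kron (mat 1 :: 'a cmat) (sigma_BC q rhoc)) =
    (if \<forall>b. 0 < a b \<longrightarrow> 0 < q b
     then ereal (1 / (\<alpha> - 1) * log 2 (\<Sum>b | 0 < a b. q b powr (1 - \<alpha>) * a b powr \<alpha>)) else \<infinity>)"
proof -
  define K where "K = (\<lambda>b. kron (mat 1 :: 'a cmat) (ptrace1 (rhoc b)))"
  define Q where "Q = (\<lambda>b. sandwiched_trace \<alpha> (rhoc b) (K b))"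
  have p0: "0 \<le> p b" and q0: "0 \<le> q b" for b using p q by (auto simp: prob_dists_def)
  have R: "psd (rhoc b)" and trR: "mtrace (rhoc b) = 1" for b
    using rho by (auto simp: density_op_def)
  have R0: "rhoc b \<noteq> 0" for b using trR[of b] by (auto simp: mtrace_def)
  have Q: "0 < Q b" for b unfolding Q_def K_def by (rule sandwiched_trace_kron_ptrace1_pos[OF rho])
  have apos: "0 < a b \<longleftrightarrow> 0 < p b" for b
    using p0[of b] Q[of b] by (simp add: a_def Q_def K_def zero_less_mult_iff)
  have trace: "Re (mtrace (cq_state p rhoc)) = 1"
    using p by (simp add: cq_state_blk mtrace_blk mtrace_smat trR Re_sum prob_dists_def)
  have supp_iff: "supp (cq_state p rhoc) \<subseteq> supp (kron (mat 1 :: 'a cmat) (sigma_BC q rhoc)) \<longleftrightarrow>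
      (\<forall>b. 0 < a b \<longrightarrow> 0 < q b)"
    unfolding apos
    by (rule supp_cq_state_le_kron_sigma_BC_iff) (simp_all add: p0 q0 R R0)
  have weight_term: "(q b powr x * p b * q b powr x) powr \<alpha> * Q b =
      (if 0 < a b then q b powr (1 - \<alpha>) * a b powr \<alpha> else 0)"
    if "\<forall>b. 0 < a b \<longrightarrow> 0 < q b" and x: "x = (1 - \<alpha>) / (2 * \<alpha>)" for b x
  proof (cases "0 < p b")
    case True
    have "a b powr \<alpha> = p b powr \<alpha> * Q b"
      using True Q[of b] \<alpha> by (simp add: a_def Q_def K_def powr_mult powr_powr)
    thus ?thesis
      using that True p0 \<alpha> apos by (simp add: sandwich_weight_powr)
  next
    case False
    hence "p b = 0" using p0[of b] by simp
    thus ?thesis using apos[of b] by simp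
  qed
  have "sandwiched_trace \<alpha> (cq_state p rhoc) (kron (mat 1 :: 'a cmat) (sigma_BC q rhoc)) =
      (\<Sum>b | 0 < a b. q b powr (1 - \<alpha>) * a b powr \<alpha>)" if "\<forall>b. 0 < a b \<longrightarrow> 0 < q b"
    unfolding cq_state_blk kron_sigma_BC_blk using that
    by (simp add: sandwiched_trace_blk_smat R psd_kron_ptrace1 p0 q0 weight_term[unfolded Q_def K_def]
        flip: sum.inter_filter)
  thus ?thesis unfolding renyi_D_sandwiched_trace supp_iff trace by simp
qed

section \<open>Optimising the classical weights\<close>

lemma prob_dists_ex_pos:
  assumes "q \<in> prob_dists"
  shows "\<exists>b. 0 < q b"
proof (rule ccontr)
  assume "\<nexists>b. 0 < q b"
  hence "q = (\<lambda>_. 0)" using assms by (auto simp: prob_dists_def fun_eq_iff not_less intro: antisym)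
  thus False using assms by (simp add: prob_dists_def)
qed

text \<open>Jensen's inequality for \<open>t \<mapsto> t\<^sup>\<alpha>\<close> with weights \<open>q\<^sub>b\<close> at the points \<open>a\<^sub>b / q\<^sub>b\<close>.\<close>
lemma sum_powr_le_weighted_sum:
  fixes a q :: "'b::finite \<Rightarrow> real"
  assumes \<alpha>: "1 < \<alpha>" and q0: "\<And>b. 0 \<le> q b" and q1: "(\<Sum>b\<in>UNIV. q b) \<le> 1"
    and a0: "\<And>b. 0 \<le> a b" and aq: "\<And>b. 0 < a b \<Longrightarrow> 0 < q b"
  shows "(\<Sum>b\<in>UNIV. a b) powr \<alpha> \<le> (\<Sum>b | 0 < a b. q b powr (1 - \<alpha>) * a b powr \<alpha>)"
proof -
  define P where "P = {b. 0 < a b}"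
  have T: "(\<Sum>b\<in>UNIV. a b) = (\<Sum>b\<in>P. a b)"
    using a0 by (intro sum.mono_neutral_right) (auto simp: P_def order_le_less)
  show ?thesis
  proof (cases "P = {}")
    case True
    thus ?thesis unfolding T by (simp add: P_def)
  next
    case False
    define Qs where "Qs = (\<Sum>b\<in>P. q b)"
    have Qs0: "0 < Qs" unfolding Qs_def using False aq by (intro sum_pos) (auto simp: P_def)
    have "Qs \<le> 1" unfolding Qs_def using q1 q0 by (meson order_trans subset_UNIV sum_mono2 finite)
    have qP: "0 < q b" "q b \<noteq> 0" "0 < a b" if "b \<in> P" for b using that aq[of b] by (auto simp: P_def)
    have "((\<Sum>b\<in>P. a b) / Qs) powr \<alpha> = (\<Sum>b\<in>P. (q b / Qs) *\<^sub>R (a b / q b)) powr \<alpha>"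
      unfolding sum_divide_distrib
      by (intro arg_cong[where f = "\<lambda>t. t powr \<alpha>"] sum.cong refl) (simp add: qP)
    also have "\<dots> \<le> (\<Sum>b\<in>P. (q b / Qs) * (a b / q b) powr \<alpha>)"
    proof (rule convex_on_sum[where f = "\<lambda>t. t powr \<alpha>" and C = "{0<..}"])
      show "convex_on {0<..} (\<lambda>t::real. t powr \<alpha>)" using \<alpha> by (intro powr_convex) simp
      show "(\<Sum>b\<in>P. q b / Qs) = 1" using Qs0 by (simp add: Qs_def sum_divide_distrib[symmetric])
    qed (use False q0 Qs0 qP in auto)
    also have "\<dots> = (\<Sum>b\<in>P. q b powr (1 - \<alpha>) * a b powr \<alpha>) / Qs"
      unfolding sum_divide_distrib
      by (intro sum.cong refl) (simp add: qP q0 powr_divide powr_diff field_simps)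
    finally have "(\<Sum>b\<in>P. a b) powr \<alpha> \<le> (\<Sum>b\<in>P. q b powr (1 - \<alpha>) * a b powr \<alpha>) * Qs powr (\<alpha> - 1)"
      using Qs0 by (simp add: powr_divide sum_nonneg a0 powr_diff field_simps)
    also have "\<dots> \<le> (\<Sum>b\<in>P. q b powr (1 - \<alpha>) * a b powr \<alpha>)"
      using Qs0 \<open>Qs \<le> 1\<close> \<alpha> by (intro mult_left_le sum_nonneg powr_le1) auto
    finally show ?thesis unfolding T P_def .
  qed
qed

lemma weighted_sum_at_normalized_weights:
  fixes a :: "'b::finite \<Rightarrow> real"
  assumes a0: "\<And>b. 0 \<le> a b" and T: "0 < (\<Sum>b\<in>UNIV. a b)"
  shows "(\<Sum>b | 0 < a b. (a b / (\<Sum>b\<in>UNIV. a b)) powr (1 - \<alpha>) * a b powr \<alpha>) =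
    (\<Sum>b\<in>UNIV. a b) powr \<alpha>"
proof -
  define T where "T = (\<Sum>b\<in>UNIV. a b)"
  have "(a b / T) powr (1 - \<alpha>) * a b powr \<alpha> = a b * T powr (\<alpha> - 1)" if "0 < a b" for b
    using that T by (simp add: T_def powr_divide powr_diff powr_add[symmetric] field_simps)
  hence "(\<Sum>b | 0 < a b. (a b / T) powr (1 - \<alpha>) * a b powr \<alpha>) = (\<Sum>b | 0 < a b. a b) * T powr (\<alpha> - 1)"
    by (simp add: sum_distrib_right)
  also have "(\<Sum>b | 0 < a b. a b) = T"
    unfolding T_def using a0 by (intro sum.mono_neutral_left) (auto simp: order_le_less)
  finally show ?thesis using T by (simp add: T_def[symmetric] powr_diff)
qed

lemma SUP_weighted_power_sum:
  fixes a :: "'b::finite \<Rightarrow> real"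
  assumes \<alpha>: "1 < \<alpha>" and a0: "\<And>b. 0 \<le> a b" and T: "0 < (\<Sum>b\<in>UNIV. a b)"
  shows "(SUP q\<in>prob_dists. - (if \<forall>b. 0 < a b \<longrightarrow> 0 < q b
      then ereal (1 / (\<alpha> - 1) * log 2 (\<Sum>b | 0 < a b. q b powr (1 - \<alpha>) * a b powr \<alpha>)) else \<infinity>))
    = ereal (\<alpha> / (1 - \<alpha>) * log 2 (\<Sum>b\<in>UNIV. a b))"
    (is "(SUP q\<in>prob_dists. ?F q) = ereal ?H")
proof (rule antisym)
  have log_eq: "\<alpha> / (1 - \<alpha>) * log 2 (\<Sum>b\<in>UNIV. a b) = - (1 / (\<alpha> - 1) * log 2 ((\<Sum>b\<in>UNIV. a b) powr \<alpha>))"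
    using T \<alpha> by (simp add: log_powr field_simps)
  show "(SUP q\<in>prob_dists. ?F q) \<le> ereal ?H"
  proof (rule SUP_least)
    fix q :: "'b \<Rightarrow> real" assume q: "q \<in> prob_dists"
    show "?F q \<le> ereal ?H"
    proof (cases "\<forall>b. 0 < a b \<longrightarrow> 0 < q b")
      case True
      hence "(\<Sum>b\<in>UNIV. a b) powr \<alpha> \<le> (\<Sum>b | 0 < a b. q b powr (1 - \<alpha>) * a b powr \<alpha>)"
        using q by (intro sum_powr_le_weighted_sum \<alpha> a0) (auto simp: prob_dists_def)
      moreover have "0 < (\<Sum>b\<in>UNIV. a b) powr \<alpha>" using T by simp
      ultimately have "log 2 ((\<Sum>b\<in>UNIV. a b) powr \<alpha>) \<le>
          log 2 (\<Sum>b | 0 < a b. q b powr (1 - \<alpha>) * a b powr \<alpha>)"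
        by (metis log_le_cancel_iff order_less_le_trans one_less_numeral_iff semiring_norm(76))
      thus ?thesis using True \<alpha> unfolding log_eq by (simp add: divide_right_mono)
    qed auto
  qed
  define q where "q = (\<lambda>b. a b / (\<Sum>b\<in>UNIV. a b))"
  have q: "q \<in> prob_dists"
    using T a0 by (simp add: prob_dists_def q_def sum_divide_distrib[symmetric])
  have Fq: "?F q = ereal ?H"
  proof -
    have "\<forall>b. 0 < a b \<longrightarrow> 0 < q b" using T by (simp add: q_def)
    moreover have "(\<Sum>b | 0 < a b. q b powr (1 - \<alpha>) * a b powr \<alpha>) = (\<Sum>b\<in>UNIV. a b) powr \<alpha>"
      unfolding q_def by (rule weighted_sum_at_normalized_weights[OF a0 T])
    ultimately show ?thesis by (simp only: if_P log_eq uminus_ereal.simps)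
  qed
  show "ereal ?H \<le> (SUP q\<in>prob_dists. ?F q)" unfolding Fq[symmetric] by (rule SUP_upper[OF q])
qed

theorem lemma4p2:
  fixes p :: "'b::finite \<Rightarrow> real"
    and rhoc :: "'b \<Rightarrow> ('a::finite \<times> 'c::finite) cmat"
    and \<alpha> :: real
  assumes "p \<in> prob_dists"
    and "\<And>b. density_op (rhoc b)"
    and "1 < \<alpha>"
  shows "ereal (H_partial \<alpha> p rhoc) =
    (SUP q\<in>prob_dists. - renyi_D \<alpha> (cq_state p rhoc) (kron (mat 1 :: 'a cmat) (sigma_BC q rhoc)))"
proof -
  define a where "a = (\<lambda>b. p b *
    sandwiched_trace \<alpha> (rhoc b) (kron (mat 1 :: 'a cmat) (ptrace1 (rhoc b))) powr (1 / \<alpha>))"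
  have p0: "0 \<le> p b" for b using assms(1) by (simp add: prob_dists_def)
  have a0: "0 \<le> a b" for b using p0[of b] by (simp add: a_def)
  obtain b0 where "0 < p b0" using prob_dists_ex_pos[OF assms(1)] ..
  hence "0 < a b0" unfolding a_def
    using sandwiched_trace_kron_ptrace1_pos[OF assms(2), of \<alpha> b0] by (intro mult_pos_pos) simp_all
  hence T: "0 < (\<Sum>b\<in>UNIV. a b)" using a0 by (intro sum_pos2) auto
  have "H_partial \<alpha> p rhoc = \<alpha> / (1 - \<alpha>) * log 2 (\<Sum>b\<in>UNIV. a b)"
    unfolding H_partial_def powr_cond_H_down[OF assms(2,3)] a_def ..
  moreover have "- renyi_D \<alpha> (cq_state p rhoc) (kron (mat 1 :: 'a cmat) (sigma_BC q rhoc)) =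
      - (if \<forall>b. 0 < a b \<longrightarrow> 0 < q b
         then ereal (1 / (\<alpha> - 1) * log 2 (\<Sum>b | 0 < a b. q b powr (1 - \<alpha>) * a b powr \<alpha>))
         else \<infinity>)" if "q \<in> prob_dists" for q
    using renyi_D_cq_state_sigma_BC[where rhoc = rhoc, OF assms(1) that assms(2,3)]
    by (simp add: a_def)
  ultimately show ?thesis
    using SUP_weighted_power_sum[OF assms(3) a0 T] by (simp cong: SUP_cong)
qed

end
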